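(* Let $p,q>1$ and $t>2$, and let $u,v$ be weights on $\mathbb{R}$. Suppose that for every interval $I=(a,b)$, with $l_{I}=b-a$, \[ \left(\frac{1}{l_{I}/t}\int_{a}^{a+\frac{l_{I}}{t}}v^{q}\right)^{\frac{1}{q}}\left(\frac{1}{l_{I}/t}\int_{b-\frac{l_{I}}{t}}^{b}u^{-p'}\right)^{\frac{1}{p'}}\leq K. \] Then \[ \sup_{a<b<c}\left(\frac{v^{q}(a,b)}{c-a}\right)^{\frac{1}{q}}\left(\frac{u^{-p'}(b,c)}{c-a}\right)^{\frac{1}{p'}}\leq K. \]
   Context: A weight is a non-negative locally integrable function on $\mathbb{R}$. For a weight $\sigma$ and an interval $(a,b)$, $\sigma(a,b)=\int_{a}^{b}\sigma$; in particular $v^{q}(a,b)=\int_a^b v^q$ and $u^{-p'}(b,c)=\int_b^c u^{-p'}$. Here $p'=p/(p-1)$. *)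

theory Defs
  imports "HOL-Analysis.Analysis"
begin

definition weight :: "(real \<Rightarrow> real) \<Rightarrow> bool" where
  "weight w \<longleftrightarrow> (\<forall>x. 0 \<le> w x) \<and> (\<forall>a b. w integrable_on {a..b})"

definition conj_exp :: "real \<Rightarrow> real" where
  "conj_exp p = p / (p - 1)"

definition wmeas :: "(real \<Rightarrow> real) \<Rightarrow> real \<Rightarrow> real \<Rightarrow> real" where
  "wmeas w a b = integral {a..b} w"

end

theory Submission
  imports Defs
begin

(* Write V = v^q, U = u^(-p'), \<alpha> = V(a,b)/(c-a), \<beta> = U(b,c)/(c-a). It suffices to find an
   interval I whose first t-th part has V-average at least \<alpha> and whose last t-th part has
   U-average at least \<beta>. If there is none, start from I = (a,c) and repeatedly cut off an end
   piece of length |I|/t with too small an average (the left one if it is light for V, otherwise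
   the right one). This preserves V(l,b) \<ge> \<alpha> |I| and U(b,R) \<ge> \<beta> |I|, so I keeps straddling b,
   and V(l,b)/\<alpha> + U(b,R)/\<beta> - |I| never decreases, so it stays \<ge> c - a. But |I| \<rightarrow> 0, so the
   intervals shrink to b and V(l,b) + U(b,R) \<rightarrow> 0: a contradiction. *)

lemma integral_atLeastAtMost_le_split:
  fixes f :: "real \<Rightarrow> real"
  assumes nonneg: "\<And>x. 0 \<le> f x" and int: "\<And>x y. f integrable_on {x..y}"
  shows "integral {a..c} f \<le> integral {a..b} f + integral {b..c} f"
proof -
  have nonneg_int: "0 \<le> integral {x..y} f" for x y
    using int nonneg by (rule integral_nonneg)
  consider "b < a" | "c < b" | "a \<le> b" "b \<le> c" by linarith
  then show ?thesis
  proof cases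
    case 1
    then have "integral {a..c} f \<le> integral {b..c} f"
      by (intro integral_subset_le) (use int nonneg in auto)
    then show ?thesis using nonneg_int[of a b] by linarith
  next
    case 2
    then have "integral {a..c} f \<le> integral {a..b} f"
      by (intro integral_subset_le) (use int nonneg in auto)
    then show ?thesis using nonneg_int[of b c] by linarith
  next
    case 3
    then show ?thesis
      using Henstock_Kurzweil_Integration.integral_combine[OF 3 int] by simp
  qed
qed

lemma integral_shrinking_interval_tendsto_0:
  fixes f :: "real \<Rightarrow> real"
  assumes int: "\<And>x y. f integrable_on {x..y}" and l: "l \<longlonglongrightarrow> x" and R: "R \<longlonglongrightarrow> x"
  shows "(\<lambda>n. integral {l n..R n} f) \<longlonglongrightarrow> 0"
proof -
  define I where "I = {x - 1..x + 1}"
  define F where "F y = integral {x - 1..y} f" for y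
  have cont: "continuous_on I F"
    unfolding F_def I_def by (rule indefinite_integral_continuous_1) (rule int)
  have eventually_in_I: "\<forall>\<^sub>F n in sequentially. y n \<in> I" if "y \<longlonglongrightarrow> x" for y
    using order_tendstoD(1)[OF that, of "x - 1"] order_tendstoD(2)[OF that, of "x + 1"]
    by (simp add: I_def eventually_conj_iff eventually_mono)
  have F_diff: "F (max y z) - F y = integral {y..z} f" if "y \<in> I" "z \<in> I" for y z
  proof (cases "y \<le> z")
    case True
    with that show ?thesis
      using Henstock_Kurzweil_Integration.integral_combine[of "x - 1" y z f] int
      by (simp add: F_def I_def)
  qed simp
  have F_tendsto: "(\<lambda>n. F (g n)) \<longlonglongrightarrow> F x" if "g \<longlonglongrightarrow> x" for g
    by (rule continuous_on_tendsto_compose[OF cont that _ eventually_in_I[OF that]])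
       (simp add: I_def)
  have "(\<lambda>n. max (l n) (R n)) \<longlonglongrightarrow> x"
    using tendsto_max[OF l R] by simp
  from tendsto_diff[OF F_tendsto[OF this] F_tendsto[OF l]]
  have "(\<lambda>n. F (max (l n) (R n)) - F (l n)) \<longlonglongrightarrow> 0" by simp
  moreover have "\<forall>\<^sub>F n in sequentially. F (max (l n) (R n)) - F (l n) = integral {l n..R n} f"
    using eventually_in_I[OF l] eventually_in_I[OF R] by eventually_elim (rule F_diff)
  ultimately show ?thesis by (rule Lim_transform_eventually)
qed

lemma straddling_intervals_tendsto:
  fixes L R :: "nat \<Rightarrow> real"
  assumes "\<And>n. L n \<le> x" and "\<And>n. x \<le> R n" and len_0: "(\<lambda>n. R n - L n) \<longlonglongrightarrow> 0"
  shows "L \<longlonglongrightarrow> x" and "R \<longlonglongrightarrow> x"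
proof -
  show "L \<longlonglongrightarrow> x"
  proof (rule tendsto_sandwich[where f = "\<lambda>n. x - (R n - L n)" and h = "\<lambda>n. x"])
    show "\<forall>\<^sub>F n in sequentially. x - (R n - L n) \<le> L n" "\<forall>\<^sub>F n in sequentially. L n \<le> x"
      using assms(1,2) by (simp_all add: always_eventually)
    show "(\<lambda>n. x - (R n - L n)) \<longlonglongrightarrow> x"
      using tendsto_diff[OF tendsto_const len_0, of x] by simp
  qed simp
  show "R \<longlonglongrightarrow> x"
  proof (rule tendsto_sandwich[where f = "\<lambda>n. x" and h = "\<lambda>n. x + (R n - L n)"])
    show "\<forall>\<^sub>F n in sequentially. x \<le> R n" "\<forall>\<^sub>F n in sequentially. R n \<le> x + (R n - L n)"
      using assms(1,2) by (simp_all add: always_eventually)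
    show "(\<lambda>n. x + (R n - L n)) \<longlonglongrightarrow> x"
      using tendsto_add[OF tendsto_const len_0, of x] by simp
  qed simp
qed

context
  fixes f g :: "real \<Rightarrow> real"
  assumes f_nonneg: "\<And>x. 0 \<le> f x" and f_integrable: "\<And>x y. f integrable_on {x..y}"
    and g_nonneg: "\<And>x. 0 \<le> g x" and g_integrable: "\<And>x y. g integrable_on {x..y}"
begin

lemma cut_light_end_piece:
  fixes \<alpha> \<beta> h l R b :: real
  assumes \<alpha>: "0 < \<alpha>" and \<beta>: "0 < \<beta>" and h: "0 \<le> h"
    and not_heavy: "\<not> (\<alpha> * h \<le> integral {l..l + h} f \<and> \<beta> * h \<le> integral {R - h..R} g)"
  obtains l' R' where "R' - l' = R - l - h"
    and "integral {l..b} f - \<alpha> * (R - l) \<le> integral {l'..b} f - \<alpha> * (R' - l')"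
    and "integral {b..R} g - \<beta> * (R - l) \<le> integral {b..R'} g - \<beta> * (R' - l')"
    and "integral {l..b} f / \<alpha> + integral {b..R} g / \<beta> - h
           \<le> integral {l'..b} f / \<alpha> + integral {b..R'} g / \<beta>"
proof (cases "integral {l..l + h} f < \<alpha> * h")
  case True
  have "integral {l..b} f \<le> integral {l..l + h} f + integral {l + h..b} f"
    by (rule integral_atLeastAtMost_le_split[OF f_nonneg f_integrable])
  with True have left: "integral {l..b} f - \<alpha> * h \<le> integral {l + h..b} f" by linarith
  moreover have "integral {l..b} f / \<alpha> - h \<le> integral {l + h..b} f / \<alpha>"
    using divide_right_mono[OF left, of \<alpha>] \<alpha> by (simp add: diff_divide_distrib)
  ultimately show ?thesis
    using \<beta> h by (intro that[where l' = "l + h" and R' = R]) (auto simp: algebra_simps)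
next
  case False
  with not_heavy have "integral {R - h..R} g < \<beta> * h" by linarith
  moreover have "integral {b..R} g \<le> integral {b..R - h} g + integral {R - h..R} g"
    by (rule integral_atLeastAtMost_le_split[OF g_nonneg g_integrable])
  ultimately have right: "integral {b..R} g - \<beta> * h \<le> integral {b..R - h} g" by linarith
  moreover have "integral {b..R} g / \<beta> - h \<le> integral {b..R - h} g / \<beta>"
    using divide_right_mono[OF right, of \<beta>] \<beta> by (simp add: diff_divide_distrib)
  ultimately show ?thesis
    using \<alpha> h by (intro that[where l' = l and R' = "R - h"]) (auto simp: algebra_simps)
qed

lemma shrinking_intervals_if_no_heavy_ends:
  fixes t \<alpha> \<beta> a b c :: real
  assumes t: "1 < t" and \<alpha>: "0 < \<alpha>" and \<beta>: "0 < \<beta>" and "a < c"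
    and left: "\<alpha> * (c - a) \<le> integral {a..b} f" and right: "\<beta> * (c - a) \<le> integral {b..c} g"
    and not_heavy: "\<And>l R. l < R \<Longrightarrow>
      \<not> (\<alpha> * ((R - l) / t) \<le> integral {l..l + (R - l) / t} f \<and>
         \<beta> * ((R - l) / t) \<le> integral {R - (R - l) / t..R} g)"
  shows "\<exists>l R. R - l = (1 - 1 / t) ^ n * (c - a) \<and>
    \<alpha> * (R - l) \<le> integral {l..b} f \<and> \<beta> * (R - l) \<le> integral {b..R} g \<and>
    (c - a) + (R - l) \<le> integral {l..b} f / \<alpha> + integral {b..R} g / \<beta>"
proof (induction n)
  case 0
  have "c - a \<le> integral {a..b} f / \<alpha>" "c - a \<le> integral {b..c} g / \<beta>"
    using left right \<alpha> \<beta> by (simp_all add: pos_le_divide_eq mult.commute)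
  then show ?case
    using left right by (intro exI[of _ a] exI[of _ c]) simp
next
  case (Suc n)
  then obtain l R where len: "R - l = (1 - 1 / t) ^ n * (c - a)"
    and inv: "\<alpha> * (R - l) \<le> integral {l..b} f" "\<beta> * (R - l) \<le> integral {b..R} g"
      "(c - a) + (R - l) \<le> integral {l..b} f / \<alpha> + integral {b..R} g / \<beta>"
    by blast
  have "0 < 1 - 1 / t" using t by simp
  with \<open>a < c\<close> have "0 < (1 - 1 / t) ^ n * (c - a)" by simp
  then have "l < R" using len by linarith
  with t have "0 \<le> (R - l) / t" by simp
  then obtain l' R' where len': "R' - l' = R - l - (R - l) / t"
    and step: "integral {l..b} f - \<alpha> * (R - l) \<le> integral {l'..b} f - \<alpha> * (R' - l')"
      "integral {b..R} g - \<beta> * (R - l) \<le> integral {b..R'} g - \<beta> * (R' - l')"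
      "integral {l..b} f / \<alpha> + integral {b..R} g / \<beta> - (R - l) / t
         \<le> integral {l'..b} f / \<alpha> + integral {b..R'} g / \<beta>"
    by (rule cut_light_end_piece[OF \<alpha> \<beta> _ not_heavy[OF \<open>l < R\<close>]])
  have "R' - l' = (1 - 1 / t) * (R - l)"
    using len' by (simp add: left_diff_distrib)
  then have "R' - l' = (1 - 1 / t) ^ Suc n * (c - a)"
    using len by simp
  with inv step len' show ?case
    by (intro exI[of _ l'] exI[of _ R'] conjI) linarith+
qed

lemma interval_with_heavy_ends:
  fixes t \<alpha> \<beta> a b c :: real
  assumes t: "1 < t" and \<alpha>: "0 < \<alpha>" and \<beta>: "0 < \<beta>" and "a < c"
    and left: "\<alpha> * (c - a) \<le> integral {a..b} f" and right: "\<beta> * (c - a) \<le> integral {b..c} g"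
  obtains l R where "l < R"
    and "\<alpha> * ((R - l) / t) \<le> integral {l..l + (R - l) / t} f"
    and "\<beta> * ((R - l) / t) \<le> integral {R - (R - l) / t..R} g"
proof (rule ccontr)
  assume "\<not> thesis"
  have "\<forall>n. \<exists>l R. R - l = (1 - 1 / t) ^ n * (c - a) \<and>
    \<alpha> * (R - l) \<le> integral {l..b} f \<and> \<beta> * (R - l) \<le> integral {b..R} g \<and>
    (c - a) + (R - l) \<le> integral {l..b} f / \<alpha> + integral {b..R} g / \<beta>"
    by (rule allI, rule shrinking_intervals_if_no_heavy_ends[OF t \<alpha> \<beta> \<open>a < c\<close> left right])
       (use that \<open>\<not> thesis\<close> in blast)
  then obtain L R where len: "\<And>n. R n - L n = (1 - 1 / t) ^ n * (c - a)"
    and inv: "\<And>n. \<alpha> * (R n - L n) \<le> integral {L n..b} f"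
      "\<And>n. \<beta> * (R n - L n) \<le> integral {b..R n} g"
      "\<And>n. (c - a) + (R n - L n) \<le> integral {L n..b} f / \<alpha> + integral {b..R n} g / \<beta>"
    unfolding choice_iff by blast
  have "0 < 1 - 1 / t" using t by simp
  then have len_pos: "0 < R n - L n" for n
    using len \<open>a < c\<close> by simp
  have "L n \<le> b" for n
    using inv(1)[of n] mult_pos_pos[OF \<alpha> len_pos[of n]] by (cases "L n \<le> b") auto
  moreover have "b \<le> R n" for n
    using inv(2)[of n] mult_pos_pos[OF \<beta> len_pos[of n]] by (cases "b \<le> R n") auto
  moreover have "(\<lambda>n. R n - L n) \<longlonglongrightarrow> 0"
    unfolding len using t by (intro tendsto_mult_left_zero LIMSEQ_power_zero) auto
  ultimately have "L \<longlonglongrightarrow> b" "R \<longlonglongrightarrow> b"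
    by (rule straddling_intervals_tendsto)+
  have "(\<lambda>n. integral {L n..b} f) \<longlonglongrightarrow> 0" "(\<lambda>n. integral {b..R n} g) \<longlonglongrightarrow> 0"
    by (rule integral_shrinking_interval_tendsto_0[OF f_integrable \<open>L \<longlonglongrightarrow> b\<close> tendsto_const],
        rule integral_shrinking_interval_tendsto_0[OF g_integrable tendsto_const \<open>R \<longlonglongrightarrow> b\<close>])
  then have "(\<lambda>n. integral {L n..b} f / \<alpha> + integral {b..R n} g / \<beta>) \<longlonglongrightarrow> 0"
    by (intro tendsto_add_zero tendsto_divide_zero)
  moreover have "c - a \<le> integral {L n..b} f / \<alpha> + integral {b..R n} g / \<beta>" for n
    using inv(3)[of n] len_pos[of n] by linarith
  ultimately have "c - a \<le> 0"
    by (intro LIMSEQ_le_const) auto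
  with \<open>a < c\<close> show False by simp
qed

lemma split_average_bound_from_end_averages:
  fixes t s r K a b c :: real
  assumes t: "1 < t" and s: "0 \<le> s" and r: "0 \<le> r" and "a < c"
    and end_bound: "\<And>l R. l < R \<Longrightarrow>
      (integral {l..l + (R - l) / t} f / ((R - l) / t)) powr s *
      (integral {R - (R - l) / t..R} g / ((R - l) / t)) powr r \<le> K"
  shows "(integral {a..b} f / (c - a)) powr s * (integral {b..c} g / (c - a)) powr r \<le> K"
proof -
  define \<alpha> where "\<alpha> = integral {a..b} f / (c - a)"
  define \<beta> where "\<beta> = integral {b..c} g / (c - a)"
  have "0 \<le> \<alpha>" "0 \<le> \<beta>"
    using \<open>a < c\<close> integral_nonneg[OF f_integrable f_nonneg] integral_nonneg[OF g_integrable g_nonneg]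
    by (simp_all add: \<alpha>_def \<beta>_def)
  show ?thesis
  proof (cases "\<alpha> = 0 \<or> \<beta> = 0")
    case True
    have "0 \<le> K"
      using end_bound[of 0 1] by (meson order_trans mult_nonneg_nonneg powr_ge_zero zero_less_one)
    with True show ?thesis by (auto simp: \<alpha>_def \<beta>_def)
  next
    case False
    with \<open>0 \<le> \<alpha>\<close> \<open>0 \<le> \<beta>\<close> have "0 < \<alpha>" "0 < \<beta>" by auto
    moreover have "\<alpha> * (c - a) \<le> integral {a..b} f" "\<beta> * (c - a) \<le> integral {b..c} g"
      using \<open>a < c\<close> by (simp_all add: \<alpha>_def \<beta>_def)
    ultimately obtain l R where "l < R"
      and heavy: "\<alpha> * ((R - l) / t) \<le> integral {l..l + (R - l) / t} f"
        "\<beta> * ((R - l) / t) \<le> integral {R - (R - l) / t..R} g"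
      by (rule interval_with_heavy_ends[OF t _ _ \<open>a < c\<close>])
    have "0 < (R - l) / t" using \<open>l < R\<close> t by simp
    from heavy[THEN pos_le_divide_eq[OF this, THEN iffD2]]
    have "\<alpha> \<le> integral {l..l + (R - l) / t} f / ((R - l) / t)"
        "\<beta> \<le> integral {R - (R - l) / t..R} g / ((R - l) / t)" .
    with \<open>0 \<le> \<alpha>\<close> \<open>0 \<le> \<beta>\<close> s r have "\<alpha> powr s * \<beta> powr r \<le>
        (integral {l..l + (R - l) / t} f / ((R - l) / t)) powr s *
        (integral {R - (R - l) / t..R} g / ((R - l) / t)) powr r"
      by (intro mult_mono powr_mono2) auto
    also have "\<dots> \<le> K" using end_bound[OF \<open>l < R\<close>] .
    finally show ?thesis by (simp add: \<alpha>_def \<beta>_def)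
  qed
qed

end

theorem lemma2p6:
  fixes p q t K :: real and u v :: "real \<Rightarrow> real"
  assumes "p > 1" and "q > 1" and "t > 2"
    and "weight u" and "weight v"
    and "\<forall>x. u x > 0"
    and "weight (\<lambda>x. v x powr q)"
    and "weight (\<lambda>x. u x powr (- conj_exp p))"
    and hyp: "\<forall>a b. a < b \<longrightarrow>
      (wmeas (\<lambda>x. v x powr q) a (a + (b - a) / t) / ((b - a) / t)) powr (1 / q) *
      (wmeas (\<lambda>x. u x powr (- conj_exp p)) (b - (b - a) / t) b / ((b - a) / t)) powr (1 / conj_exp p)
      \<le> K"
  shows "\<forall>a b c. a < b \<and> b < c \<longrightarrow>
      (wmeas (\<lambda>x. v x powr q) a b / (c - a)) powr (1 / q) *
      (wmeas (\<lambda>x. u x powr (- conj_exp p)) b c / (c - a)) powr (1 / conj_exp p) \<le> K"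
proof (intro allI impI)
  fix a b c :: real
  assume "a < b \<and> b < c"
  moreover have "0 < conj_exp p" using \<open>p > 1\<close> by (simp add: conj_exp_def)
  ultimately show "(wmeas (\<lambda>x. v x powr q) a b / (c - a)) powr (1 / q) *
      (wmeas (\<lambda>x. u x powr (- conj_exp p)) b c / (c - a)) powr (1 / conj_exp p) \<le> K"
    using assms(2,3,7,8) hyp unfolding weight_def wmeas_def
    by (intro split_average_bound_from_end_averages
          [of "\<lambda>x. v x powr q" "\<lambda>x. u x powr (- conj_exp p)" t "1 / q" "1 / conj_exp p"]) auto
qed

end
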